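(* Let $T^X$ and $T^Y$ be stable trees marked by finite sets $X$ and $Y$, and suppose $T^X$ is compatible with $T^Y$. If an internal vertex $v$ of $T^Y$ separates three vertices of $T^X$, then $v$ is a vertex of $T^X$.
   Context: A tree is a finite connected graph without cycles (vertex set $V$, edges $2$-element subsets of $V$); leaves are vertices of valence $1$, the others internal vertices ($IV$); the tree is stable if every internal vertex has valence at least $3$. A tree marked by a finite set $X$ is a tree whose set of leaves is $X$. In a tree $T$, a vertex $v$ separates vertices $v_1,v_2,v_3$ if $v_1,v_2,v_3$ lie in three distinct connected components of $T\setminus\{v\}$. A tree $T^X$ is compatible with a tree $T^Y$ if (1) $X\subseteq Y$ and $IV^X\subseteq IV^Y$ (so every vertex of $T^X$ is a vertex of $T^Y$), and (2) for all vertices $v,v_1,v_2,v_3$ of $T^X$, $v$ separates $v_1,v_2,v_3$ in $T^X$ if and only if $v$ separates $v_1,v_2,v_3$ in $T^Y$. *)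

theory Defs
  imports Main
begin

definition graph :: "'a set \<Rightarrow> 'a set set \<Rightarrow> bool" where
  "graph V E \<longleftrightarrow> finite V \<and> (\<forall>e\<in>E. e \<subseteq> V \<and> card e = 2)"

definition walk :: "'a set \<Rightarrow> 'a set set \<Rightarrow> 'a list \<Rightarrow> bool" where
  "walk V E p \<longleftrightarrow> p \<noteq> [] \<and> set p \<subseteq> V \<and>
     (\<forall>i. Suc i < length p \<longrightarrow> {p ! i, p ! Suc i} \<in> E)"

definition connected_in :: "'a set \<Rightarrow> 'a set set \<Rightarrow> 'a \<Rightarrow> 'a \<Rightarrow> bool" where
  "connected_in V E u w \<longleftrightarrow> (\<exists>p. walk V E p \<and> hd p = u \<and> last p = w)"

definition connected_graph :: "'a set \<Rightarrow> 'a set set \<Rightarrow> bool" where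
  "connected_graph V E \<longleftrightarrow> V \<noteq> {} \<and> (\<forall>u\<in>V. \<forall>w\<in>V. connected_in V E u w)"

definition has_cycle :: "'a set \<Rightarrow> 'a set set \<Rightarrow> bool" where
  "has_cycle V E \<longleftrightarrow> (\<exists>p. walk V E p \<and> distinct p \<and> length p \<ge> 3 \<and> {last p, hd p} \<in> E)"

definition tree :: "'a set \<Rightarrow> 'a set set \<Rightarrow> bool" where
  "tree V E \<longleftrightarrow> graph V E \<and> connected_graph V E \<and> \<not> has_cycle V E"

definition valence :: "'a set set \<Rightarrow> 'a \<Rightarrow> nat" where
  "valence E x = card {e\<in>E. x \<in> e}"

definition leaves :: "'a set \<Rightarrow> 'a set set \<Rightarrow> 'a set" where
  "leaves V E = {x\<in>V. valence E x = 1}"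

definition internal_vertices :: "'a set \<Rightarrow> 'a set set \<Rightarrow> 'a set" where
  "internal_vertices V E = V - leaves V E"

definition stable_tree :: "'a set \<Rightarrow> 'a set set \<Rightarrow> bool" where
  "stable_tree V E \<longleftrightarrow> tree V E \<and> (\<forall>x\<in>internal_vertices V E. valence E x \<ge> 3)"

definition marked_tree :: "'a set \<Rightarrow> 'a set \<Rightarrow> 'a set set \<Rightarrow> bool" where
  "marked_tree X V E \<longleftrightarrow> finite X \<and> tree V E \<and> leaves V E = X"

definition separates :: "'a set \<Rightarrow> 'a set set \<Rightarrow> 'a \<Rightarrow> 'a \<Rightarrow> 'a \<Rightarrow> 'a \<Rightarrow> bool" where
  "separates V E v v1 v2 v3 \<longleftrightarrow>
     (let V' = V - {v}; E' = {e\<in>E. v \<notin> e} in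
       v1 \<in> V' \<and> v2 \<in> V' \<and> v3 \<in> V' \<and>
       \<not> connected_in V' E' v1 v2 \<and> \<not> connected_in V' E' v1 v3 \<and>
       \<not> connected_in V' E' v2 v3)"

definition compatible ::
  "'a set \<Rightarrow> 'a set \<Rightarrow> 'a set set \<Rightarrow> 'a set \<Rightarrow> 'a set \<Rightarrow> 'a set set \<Rightarrow> bool" where
  "compatible X VX EdX Y VY EdY \<longleftrightarrow>
     X \<subseteq> Y \<and> internal_vertices VX EdX \<subseteq> internal_vertices VY EdY \<and>
     (\<forall>v\<in>VX. \<forall>v1\<in>VX. \<forall>v2\<in>VX. \<forall>v3\<in>VX.
        separates VX EdX v v1 v2 v3 \<longleftrightarrow> separates VY EdY v v1 v2 v3)"

end

theory Submission
  imports Defs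
begin

text \<open>Suppose \<open>v\<close> is not a vertex of \<open>T\<^sup>X\<close> and let \<open>m\<close> be the median of \<open>v\<^sub>1, v\<^sub>2, v\<^sub>3\<close>
  in \<open>T\<^sup>X\<close>. Any two of the \<open>v\<^sub>i\<close> other than \<open>m\<close> lie in different branches at \<open>m\<close>; as \<open>m\<close> has
  valence at least 3, \<open>m\<close> separates them together with a vertex of a third branch, in \<open>T\<^sup>X\<close> and
  hence, by compatibility, in \<open>T\<^sup>Y\<close>. In \<open>T\<^sup>Y\<close>, however, \<open>m \<noteq> v\<close> and the component of
  \<open>T\<^sup>Y - v\<close> containing \<open>m\<close> contains at most one of the \<open>v\<^sub>i\<close>; two of the others are joined
  through \<open>v\<close> by a path avoiding \<open>m\<close>, a contradiction.\<close>

lemma walk_iff_successively: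
  "walk V E p \<longleftrightarrow> p \<noteq> [] \<and> set p \<subseteq> V \<and> successively (\<lambda>x y. {x, y} \<in> E) p"
  by (auto simp: walk_def successively_conv_nth)

lemma walk_nonempty: "walk V E p \<Longrightarrow> p \<noteq> []"
  by (simp add: walk_def)

lemma walk_singleton [simp]: "walk V E [x] \<longleftrightarrow> x \<in> V"
  by (simp add: walk_def)

lemma walk_rev [simp]: "walk V E (rev p) \<longleftrightarrow> walk V E p"
  by (simp add: walk_iff_successively insert_commute)

lemma walk_append_iff:
  "xs \<noteq> [] \<Longrightarrow> ys \<noteq> [] \<Longrightarrow>
   walk V E (xs @ ys) \<longleftrightarrow> walk V E xs \<and> walk V E ys \<and> {last xs, hd ys} \<in> E"
  by (auto simp: walk_iff_successively successively_append_iff)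

lemma walk_appendD:
  assumes "walk V E (xs @ ys)"
  shows "xs \<noteq> [] \<Longrightarrow> walk V E xs" and "ys \<noteq> [] \<Longrightarrow> walk V E ys"
  using assms by (auto simp: walk_iff_successively successively_append_iff)

lemma walk_glue: "walk V E (xs @ [y]) \<Longrightarrow> walk V E (y # zs) \<Longrightarrow> walk V E (xs @ y # zs)"
  by (auto simp: walk_iff_successively successively_append_iff successively_Cons)

lemma walk_remove_vertex: "walk V E p \<Longrightarrow> v \<notin> set p \<Longrightarrow> walk (V - {v}) {e \<in> E. v \<notin> e} p"
  unfolding walk_iff_successively by (auto elim!: successively_mono)

lemma walk_remove_vertexD: "walk (V - {v}) {e \<in> E. v \<notin> e} p \<Longrightarrow> walk V E p"
  unfolding walk_iff_successively by (auto elim!: successively_mono)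

lemma walk_distinct_shortcut:
  "walk V E p \<Longrightarrow> \<exists>q. walk V E q \<and> distinct q \<and> hd q = hd p \<and> last q = last p"
proof (induction "length p" arbitrary: p rule: less_induct)
  case less
  show ?case
  proof (cases "distinct p")
    case False
    then obtain xs ys zs y where p: "p = xs @ [y] @ ys @ [y] @ zs"
      using not_distinct_decomp by blast
    have "walk V E (xs @ [y])" "walk V E (y # zs)"
      using less.prems walk_appendD[of V E "xs @ [y]" "ys @ [y] @ zs"]
        walk_appendD[of V E "xs @ [y] @ ys" "y # zs"] p by simp_all
    then have "walk V E (xs @ y # zs)" by (rule walk_glue)
    moreover have "length (xs @ y # zs) < length p" using p by simp
    moreover have "hd (xs @ y # zs) = hd p" "last (xs @ y # zs) = last p"
      using p by (cases xs; cases zs; simp)+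
    ultimately show ?thesis using less.hyps by metis
  qed (use less.prems in blast)
qed

lemma connected_in_refl: "u \<in> V \<Longrightarrow> connected_in V E u u"
  unfolding connected_in_def by (intro exI[of _ "[u]"]) simp

lemma connected_in_walk: "walk V E p \<Longrightarrow> connected_in V E (hd p) (last p)"
  unfolding connected_in_def by blast

lemma connected_in_vertices: "connected_in V E u w \<Longrightarrow> u \<in> V \<and> w \<in> V"
  unfolding connected_in_def walk_def by (metis hd_in_set last_in_set subsetD)

lemma connected_in_sym: "connected_in V E u w \<Longrightarrow> connected_in V E w u"
  unfolding connected_in_def by (metis walk_rev hd_rev last_rev)

lemma connected_in_trans:
  assumes "connected_in V E u w" "connected_in V E w z"
  shows "connected_in V E u z"
proof -
  obtain p q where p: "walk V E p" "hd p = u" "last p = w" and q: "walk V E q" "hd q = w" "last q = z"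
    using assms unfolding connected_in_def by blast
  obtain p' where p': "p = p' @ [w]" using p by (metis append_butlast_last_id walk_def)
  obtain q' where q': "q = w # q'" using q by (cases q) (auto simp: walk_def)
  have "walk V E (p' @ w # q')" using walk_glue p p' q q' by simp
  moreover have "hd (p' @ w # q') = u" "last (p' @ w # q') = z"
    using p p' q q' by (cases p'; cases q'; simp)+
  ultimately show ?thesis unfolding connected_in_def by blast
qed

lemma connected_in_distinct_walk:
  "connected_in V E u w \<Longrightarrow> \<exists>p. walk V E p \<and> distinct p \<and> hd p = u \<and> last p = w"
  unfolding connected_in_def using walk_distinct_shortcut by metis

abbreviation connected_avoiding :: "'a set \<Rightarrow> 'a set set \<Rightarrow> 'a \<Rightarrow> 'a \<Rightarrow> 'a \<Rightarrow> bool" where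
  "connected_avoiding V E v \<equiv> connected_in (V - {v}) {e \<in> E. v \<notin> e}"

lemma separates_iff:
  "separates V E v a b c \<longleftrightarrow> a \<in> V - {v} \<and> b \<in> V - {v} \<and> c \<in> V - {v} \<and>
     \<not> connected_avoiding V E v a b \<and> \<not> connected_avoiding V E v a c \<and>
     \<not> connected_avoiding V E v b c"
  by (simp add: separates_def Let_def)

lemma separates_distinct: "separates V E v a b c \<Longrightarrow> a \<noteq> b \<and> a \<noteq> c \<and> b \<noteq> c"
  unfolding separates_iff using connected_in_refl by metis

lemma graph_edgeD: "graph V E \<Longrightarrow> {a, b} \<in> E \<Longrightarrow> a \<noteq> b \<and> a \<in> V \<and> b \<in> V"
  unfolding graph_def by (cases "a = b") auto

lemma tree_neighbours_not_connected_avoiding: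
  assumes "tree V E" "{a, b} \<in> E" "{a, c} \<in> E" "b \<noteq> c"
  shows "\<not> connected_avoiding V E a b c"
proof
  assume "connected_avoiding V E a b c"
  then obtain p where p: "walk (V - {a}) {e \<in> E. a \<notin> e} p" "distinct p" "hd p = b" "last p = c"
    using connected_in_distinct_walk[of "V - {a}" "{e \<in> E. a \<notin> e}" b c] by blast
  have "p \<noteq> []" "a \<notin> set p" using p(1) unfolding walk_def by blast+
  moreover have "a \<in> V" using assms(1,2) graph_edgeD[of V E a b] by (simp add: tree_def)
  ultimately have "walk V E (a # p)"
    using walk_append_iff[of "[a]" p V E] walk_remove_vertexD[OF p(1)] assms(2) p(3) by simp
  moreover have "length p \<ge> 2" using p(3,4) \<open>p \<noteq> []\<close> assms(4) by (cases p; cases "tl p") auto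
  moreover have "{last (a # p), hd (a # p)} \<in> E" using p(4) \<open>p \<noteq> []\<close> assms(3) by (simp add: insert_commute)
  ultimately have "has_cycle V E" unfolding has_cycle_def using p(2) \<open>a \<notin> set p\<close>
    by (intro exI[of _ "a # p"]) simp
  then show False using assms(1) by (simp add: tree_def)
qed

definition branch :: "'a set \<Rightarrow> 'a set set \<Rightarrow> 'a \<Rightarrow> 'a \<Rightarrow> 'a \<Rightarrow> bool" where
  "branch V E m n u \<longleftrightarrow> {m, n} \<in> E \<and> connected_avoiding V E m u n"

lemma branch_self: "graph V E \<Longrightarrow> {m, u} \<in> E \<Longrightarrow> branch V E m u u"
  unfolding branch_def using graph_edgeD[of V E m u] by (auto intro: connected_in_refl)

lemma walk_last_edge_branch:
  assumes "walk V E (p @ [m])" "p \<noteq> []" "m \<notin> set p"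
  shows "branch V E m (last p) (hd p)"
proof -
  have "walk V E p" "{last p, m} \<in> E" using assms(1,2) walk_append_iff[of p "[m]"] by simp_all
  then show ?thesis unfolding branch_def
    using connected_in_walk[OF walk_remove_vertex[OF _ assms(3)]] by (simp add: insert_commute)
qed

lemma walk_through_branches:
  assumes "walk V E (p1 @ m # p2)"
  shows "p1 \<noteq> [] \<Longrightarrow> m \<notin> set p1 \<Longrightarrow> branch V E m (last p1) (hd p1)"
    and "p2 \<noteq> [] \<Longrightarrow> m \<notin> set p2 \<Longrightarrow> branch V E m (hd p2) (last p2)"
proof -
  show "branch V E m (last p1) (hd p1)" if "p1 \<noteq> []" "m \<notin> set p1"
    using walk_last_edge_branch[OF _ that] walk_appendD(1)[of V E "p1 @ [m]" p2] assms by simp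
  have "walk V E (rev p2 @ [m])"
    using walk_appendD(2)[of V E p1 "m # p2"] assms by (simp flip: walk_rev[of _ _ "m # p2"])
  then show "branch V E m (hd p2) (last p2)" if "p2 \<noteq> []" "m \<notin> set p2"
    using walk_last_edge_branch[of V E "rev p2" m] that by (simp add: last_rev hd_rev)
qed

lemma tree_branches_not_connected_avoiding:
  assumes "tree V E" "branch V E m na a" "branch V E m nb b" "na \<noteq> nb"
  shows "\<not> connected_avoiding V E m a b"
proof
  assume "connected_avoiding V E m a b"
  with assms(2,3) have "connected_avoiding V E m na nb"
    unfolding branch_def by (blast intro: connected_in_trans connected_in_sym)
  moreover have "{m, na} \<in> E" "{m, nb} \<in> E" using assms(2,3) by (simp_all add: branch_def)
  ultimately show False using tree_neighbours_not_connected_avoiding[OF assms(1)] assms(4) by blast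
qed

text \<open>The vertex \<open>m\<close> is the first vertex of a walk from \<open>z\<close> to \<open>x\<close> that lies on a simple walk
  from \<open>x\<close> to \<open>y\<close>.\<close>

lemma connected_graph_median:
  assumes "connected_graph V E" "x \<in> V" "y \<in> V" "z \<in> V"
  obtains m nx ny nz where "m \<in> V"
    "x \<noteq> m \<Longrightarrow> branch V E m nx x" "y \<noteq> m \<Longrightarrow> branch V E m ny y"
    "z \<noteq> m \<Longrightarrow> branch V E m nz z"
    "x \<noteq> m \<Longrightarrow> y \<noteq> m \<Longrightarrow> nx \<noteq> ny" "x \<noteq> m \<Longrightarrow> z \<noteq> m \<Longrightarrow> nx \<noteq> nz"
    "y \<noteq> m \<Longrightarrow> z \<noteq> m \<Longrightarrow> ny \<noteq> nz"
proof -
  have conn: "\<forall>u\<in>V. \<forall>w\<in>V. connected_in V E u w"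
    using assms(1) by (simp add: connected_graph_def)
  have "connected_in V E x y" using conn assms(2,3) by blast
  then obtain p where p: "walk V E p" "distinct p" "hd p = x" "last p = y"
    using connected_in_distinct_walk[of V E x y] by blast
  obtain q where q: "walk V E q" "hd q = z" "last q = x"
    using conn assms(2,4) unfolding connected_in_def by blast
  have "x \<in> set p" "x \<in> set q" using p q walk_nonempty by (metis hd_in_set last_in_set)+
  then obtain q1 m r where q1: "q = q1 @ m # r" "m \<in> set p" "\<forall>u\<in>set q1. u \<notin> set p"
    using split_list_first_prop[of q "\<lambda>u. u \<in> set p"] by blast
  obtain p1 p2 where p12: "p = p1 @ m # p2" using split_list[OF q1(2)] by blast
  have m_notin: "m \<notin> set p1" "m \<notin> set p2" "m \<notin> set q1" and "set p1 \<inter> set p2 = {}"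
    using p(2) p12 q1 by auto
  show thesis
  proof
    show "m \<in> V" using p(1) q1(2) by (auto simp: walk_def)
    show "branch V E m (last p1) x" if "x \<noteq> m"
      using walk_through_branches(1)[of V E p1 m p2] that p(1,3) p12 m_notin by (cases p1) auto
    show "branch V E m (hd p2) y" if "y \<noteq> m"
      using walk_through_branches(2)[of V E p1 m p2] that p(1,4) p12 m_notin by (cases p2) auto
    show "branch V E m (last q1) z" if "z \<noteq> m"
      using walk_through_branches(1)[of V E q1 m r] that q(1,2) q1 m_notin by (cases q1) auto
    show "last p1 \<noteq> hd p2" if "x \<noteq> m" "y \<noteq> m"
      using that p(3,4) p12 \<open>set p1 \<inter> set p2 = {}\<close> by (cases p1 rule: rev_cases; cases p2) auto
    show "last p1 \<noteq> last q1" if "x \<noteq> m" "z \<noteq> m"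
      using that p(3) q(2) p12 q1 by (cases p1 rule: rev_cases; cases q1 rule: rev_cases) auto
    show "hd p2 \<noteq> last q1" if "y \<noteq> m" "z \<noteq> m"
      using that p(4) q(2) p12 q1 by (cases p2; cases q1 rule: rev_cases) auto
  qed
qed

lemma graph_edge_at:
  assumes "graph V E" "e \<in> E" "m \<in> e"
  obtains u where "e = {m, u}"
proof -
  obtain x y where "e = {x, y}" using assms(1,2) card_2_iff[of e] by (auto simp: graph_def)
  then show thesis using assms(3) that by (auto simp: insert_commute)
qed

lemma stable_tree_third_neighbour:
  assumes "stable_tree V E" "{m, a} \<in> E" "{m, b} \<in> E" "a \<noteq> b"
  obtains u where "{m, u} \<in> E" "u \<noteq> a" "u \<noteq> b"
proof -
  have g: "graph V E" and stable: "\<forall>x\<in>internal_vertices V E. valence E x \<ge> 3"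
    using assms(1) by (simp_all add: stable_tree_def tree_def)
  have "E \<subseteq> Pow V" "finite V" using g by (auto simp: graph_def)
  then have "finite E" by (simp add: finite_subset)
  then have fin: "finite {e \<in> E. m \<in> e}" by simp
  have "m \<noteq> a" "m \<noteq> b" "m \<in> V" using graph_edgeD[OF g assms(2)] graph_edgeD[OF g assms(3)] by simp_all
  have two: "card {{m, a}, {m, b}} = 2" using assms(4) by (auto simp: doubleton_eq_iff)
  have "{{m, a}, {m, b}} \<subseteq> {e \<in> E. m \<in> e}" using assms(2,3) by auto
  from card_mono[OF fin this] two have "valence E m \<ge> 2" by (simp add: valence_def)
  then have "m \<in> internal_vertices V E"
    using \<open>m \<in> V\<close> by (simp add: internal_vertices_def leaves_def)
  with stable have three: "valence E m \<ge> 3" by blast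
  have "\<not> {e \<in> E. m \<in> e} \<subseteq> {{m, a}, {m, b}}"
  proof
    assume "{e \<in> E. m \<in> e} \<subseteq> {{m, a}, {m, b}}"
    from card_mono[OF _ this] two three show False by (simp add: valence_def)
  qed
  then obtain e where e: "e \<in> E" "m \<in> e" "e \<noteq> {m, a}" "e \<noteq> {m, b}" by blast
  then obtain u where "e = {m, u}" using graph_edge_at[OF g] by blast
  then show thesis using that e by blast
qed

lemma stable_tree_separates_branches:
  assumes "stable_tree V E" "branch V E m na a" "branch V E m nb b" "na \<noteq> nb"
  obtains u where "separates V E m a b u"
proof -
  have t: "tree V E" and g: "graph V E" using assms(1) by (simp_all add: stable_tree_def tree_def)
  obtain u where u: "{m, u} \<in> E" "u \<noteq> na" "u \<noteq> nb"
    using stable_tree_third_neighbour[OF assms(1), of m na nb] assms(2-4) by (auto simp: branch_def)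
  have bu: "branch V E m u u" using branch_self[OF g u(1)] .
  have "a \<in> V - {m}" "b \<in> V - {m}" "u \<in> V - {m}"
    using assms(2,3) bu connected_in_vertices unfolding branch_def by fast+
  moreover have "\<not> connected_avoiding V E m a b" "\<not> connected_avoiding V E m a u"
    "\<not> connected_avoiding V E m b u"
    using tree_branches_not_connected_avoiding[OF t assms(2,3,4)]
      tree_branches_not_connected_avoiding[OF t assms(2) bu]
      tree_branches_not_connected_avoiding[OF t assms(3) bu] u(2,3) by auto
  ultimately have "separates V E m a b u" by (simp add: separates_iff)
  then show thesis by (rule that)
qed

lemma stable_tree_median_separates:
  assumes "stable_tree V E" "x \<in> V" "y \<in> V" "z \<in> V"
  obtains m where "m \<in> V"
    "\<And>a b. a \<in> {x, y, z} \<Longrightarrow> b \<in> {x, y, z} \<Longrightarrow> a \<noteq> b \<Longrightarrow> a \<noteq> m \<Longrightarrow> b \<noteq> m \<Longrightarrow>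
      \<exists>u. separates V E m a b u"
proof -
  have cg: "connected_graph V E" using assms(1) by (simp add: stable_tree_def tree_def)
  obtain m nx ny nz where m: "m \<in> V"
    "x \<noteq> m \<Longrightarrow> branch V E m nx x" "y \<noteq> m \<Longrightarrow> branch V E m ny y"
    "z \<noteq> m \<Longrightarrow> branch V E m nz z"
    "x \<noteq> m \<Longrightarrow> y \<noteq> m \<Longrightarrow> nx \<noteq> ny" "x \<noteq> m \<Longrightarrow> z \<noteq> m \<Longrightarrow> nx \<noteq> nz"
    "y \<noteq> m \<Longrightarrow> z \<noteq> m \<Longrightarrow> ny \<noteq> nz"
    using connected_graph_median[OF cg assms(2-4)] by blast
  have "\<exists>na nb. branch V E m na a \<and> branch V E m nb b \<and> na \<noteq> nb"
    if "a \<in> {x, y, z}" "b \<in> {x, y, z}" "a \<noteq> b" "a \<noteq> m" "b \<noteq> m" for a b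
    using that m(2-7) by auto
  then show thesis
    using that m(1) stable_tree_separates_branches[OF assms(1)] by metis
qed

text \<open>A simple walk from \<open>w\<close> to \<open>a\<close> passes through \<open>v\<close>, and its part after \<open>v\<close> avoids \<open>w\<close>.\<close>

lemma connected_avoiding_through:
  assumes "connected_in V E w a" "v \<noteq> w" "\<not> connected_avoiding V E v w a"
  shows "connected_avoiding V E w v a"
proof -
  obtain p where p: "walk V E p" "distinct p" "hd p = w" "last p = a"
    using connected_in_distinct_walk[OF assms(1)] by blast
  have "v \<in> set p"
    using assms(3) connected_in_walk[OF walk_remove_vertex[OF p(1)]] p(3,4) by metis
  then obtain p1 p2 where p12: "p = p1 @ v # p2" by (meson split_list)
  with p(3) assms(2) have "p1 \<noteq> []" by auto
  with p(2,3) p12 have "w \<notin> set (v # p2)" by (cases p1) auto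
  moreover have "walk V E (v # p2)" using walk_appendD(2)[of V E p1 "v # p2"] p(1) p12 by simp
  moreover have "last (v # p2) = a" using p(4) p12 by simp
  ultimately show ?thesis using connected_in_walk[OF walk_remove_vertex, of V E "v # p2" w] by simp
qed

lemma connected_graph_connected_avoiding:
  assumes "connected_graph V E" "m \<in> V" "a \<in> V" "b \<in> V" "m \<noteq> v"
    "\<not> connected_avoiding V E v m a" "\<not> connected_avoiding V E v m b"
  shows "connected_avoiding V E m a b"
proof -
  have "connected_in V E m a" "connected_in V E m b"
    using assms(1-4) by (simp_all add: connected_graph_def)
  then have "connected_avoiding V E m v a" "connected_avoiding V E m v b"
    using connected_avoiding_through[of V E m _ v] assms(5-7) by auto
  then show ?thesis by (blast intro: connected_in_trans connected_in_sym)
qed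

text \<open>The component of \<open>G - v\<close> containing \<open>m\<close> contains at most one of \<open>a, b, c\<close>.\<close>

lemma connected_graph_separates_pair:
  assumes "connected_graph V E" "m \<in> V" "m \<noteq> v" "separates V E v a b c"
  obtains x y where "x \<in> {a, b, c}" "y \<in> {a, b, c}" "x \<noteq> y" "connected_avoiding V E m x y"
proof -
  have V: "a \<in> V" "b \<in> V" "c \<in> V" using assms(4) by (simp_all add: separates_iff)
  have distinct: "a \<noteq> b" "a \<noteq> c" "b \<noteq> c" using separates_distinct[OF assms(4)] by simp_all
  have apart: "\<not> connected_avoiding V E v a b" "\<not> connected_avoiding V E v a c"
    "\<not> connected_avoiding V E v b c"
    using assms(4) by (simp_all add: separates_iff)
  note joined = connected_graph_connected_avoiding[OF assms(1,2) _ _ assms(3)]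
  consider "\<not> connected_avoiding V E v m b" "\<not> connected_avoiding V E v m c"
    | "\<not> connected_avoiding V E v m a" "\<not> connected_avoiding V E v m c"
    | "\<not> connected_avoiding V E v m a" "\<not> connected_avoiding V E v m b"
  proof -
    have one_side: "\<not> connected_avoiding V E v m x \<or> \<not> connected_avoiding V E v m y"
      if "\<not> connected_avoiding V E v x y" for x y
      using that connected_in_trans[OF connected_in_sym, of "V - {v}" _ m x y] by blast
    show thesis using one_side[OF apart(1)] one_side[OF apart(2)] one_side[OF apart(3)] that by blast
  qed
  then show thesis
    using that joined V distinct by cases blast+
qed

lemma compatible_vertices_subset:
  assumes "marked_tree X VX EdX" "marked_tree Y VY EdY" "compatible X VX EdX Y VY EdY"
  shows "VX \<subseteq> VY"
proof -
  have "leaves VX EdX \<subseteq> leaves VY EdY" using assms by (simp add: marked_tree_def compatible_def)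
  moreover have "internal_vertices VX EdX \<subseteq> internal_vertices VY EdY"
    using assms(3) by (simp add: compatible_def)
  ultimately show ?thesis by (auto simp: internal_vertices_def leaves_def)
qed

lemma compatible_separates:
  assumes "compatible X VX EdX Y VY EdY" "m \<in> VX" "separates VX EdX m a b c"
  shows "separates VY EdY m a b c"
proof -
  have "a \<in> VX" "b \<in> VX" "c \<in> VX" using assms(3) by (simp_all add: separates_iff)
  with assms show ?thesis unfolding compatible_def by blast
qed

theorem lemma3p4:
  fixes X Y VX VY :: "'a set" and EdX EdY :: "'a set set"
  assumes "marked_tree X VX EdX" and "stable_tree VX EdX"
    and "marked_tree Y VY EdY" and "stable_tree VY EdY"
    and "compatible X VX EdX Y VY EdY"
    and "v \<in> internal_vertices VY EdY"
    and "v1 \<in> VX" and "v2 \<in> VX" and "v3 \<in> VX"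
    and "separates VY EdY v v1 v2 v3"
  shows "v \<in> VX"
proof (rule ccontr)
  assume "v \<notin> VX"
  obtain m where m: "m \<in> VX" and sepX:
    "\<And>a b. a \<in> {v1, v2, v3} \<Longrightarrow> b \<in> {v1, v2, v3} \<Longrightarrow> a \<noteq> b \<Longrightarrow> a \<noteq> m \<Longrightarrow> b \<noteq> m \<Longrightarrow>
      \<exists>u. separates VX EdX m a b u"
    using stable_tree_median_separates[OF assms(2,7-9)] by blast
  have "m \<in> VY" "m \<noteq> v"
    using m \<open>v \<notin> VX\<close> compatible_vertices_subset[OF assms(1,3,5)] by auto
  moreover have "connected_graph VY EdY" using assms(4) by (simp add: stable_tree_def tree_def)
  ultimately obtain x y where xy: "x \<in> {v1, v2, v3}" "y \<in> {v1, v2, v3}" "x \<noteq> y"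
    and joined: "connected_avoiding VY EdY m x y"
    using connected_graph_separates_pair[of VY EdY m v v1 v2 v3] assms(10) by blast
  have "x \<noteq> m" "y \<noteq> m" using connected_in_vertices[OF joined] by auto
  then obtain u where "separates VX EdX m x y u" using sepX xy by blast
  then have "separates VY EdY m x y u" using compatible_separates[OF assms(5) m] by blast
  with joined show False by (simp add: separates_iff)
qed

end
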